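(* For any $n$-agent rank-based auction with (non-constant) allocation rule $x$ and any $k\in\{1,\dots,n-1\}$, the function $Z_k(q)=(1-q)\,x_k'(q)/x'(q)$ achieves a single local maximum for $q\in[0,1]$.
   Context: For $k\in\{1,\dots,n-1\}$ the $k$-highest-bids-win allocation rule in quantile space is $x_k(q)=\sum_{i=0}^{k-1}\binom{n-1}{i}q^{n-1-i}(1-q)^i$, with derivative $x_k'(q)=(n-1)\binom{n-2}{k-1}q^{n-k-1}(1-q)^{k-1}$; $x_0\equiv 0$, $x_n\equiv 1$. A rank-based auction with position weights $1\ge w_1\ge\cdots\ge w_n\ge 0$ (and $w_{n+1}:=0$) has allocation rule $x(q)=\sum_{k=1}^{n}(w_k-w_{k+1})x_k(q)$. *)

theory Defs
  imports "HOL-Analysis.Analysis"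
begin

text \<open>k-highest-bids-win allocation rule in quantile space (n agents).
  For k = 0 the sum is empty (x_0 = 0); for k = n it equals 1 (x_n = 1).\<close>
definition xk :: "nat \<Rightarrow> nat \<Rightarrow> real \<Rightarrow> real" where
  "xk n k q = (\<Sum>i<k. real ((n - 1) choose i) * q ^ (n - 1 - i) * (1 - q) ^ i)"

text \<open>Rank-based auction allocation rule with position weights w 1, ..., w n,
  using the convention w (n+1) = 0.\<close>
definition alloc :: "nat \<Rightarrow> (nat \<Rightarrow> real) \<Rightarrow> real \<Rightarrow> real" where
  "alloc n w q = (\<Sum>k\<in>{1..n}. (w k - (if k < n then w (Suc k) else 0)) * xk n k q)"

definition Zk :: "nat \<Rightarrow> (nat \<Rightarrow> real) \<Rightarrow> nat \<Rightarrow> real \<Rightarrow> real" where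
  "Zk n w k q = (1 - q) * deriv (xk n k) q / deriv (alloc n w) q"

end

theory Submission
  imports Defs
begin

text \<open>Write n = p + 2 and k = a + 1. Then x_k' and x' are, up to the factor p + 1,
  nonnegative combinations of the Bernstein polynomials of degree p evaluated at 1 - q, and in the
  logit coordinate u = ln (q / (1 - q)) every ratio of two such polynomials is an exponential in u.
  This turns binom(p, a) / Z_k(q) into G(u) = \<Sum>j c_j (exp ((k - j) u) + exp ((k - j + 1) u)) with
  coefficients c_j \<ge> 0, not all zero. Since in each pair at least one exponent is nonzero, G' is
  strictly increasing, so G first decreases and then increases in u; as the logit is increasing,
  Z_k first increases and then decreases in q.\<close>

lemma has_real_derivative_Bernstein_Suc:
  "(Bernstein (Suc p) (Suc i) has_real_derivative
     real (Suc p) * (Bernstein p i x - Bernstein p (Suc i) x)) (at x)"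
proof -
  define C where "C = real (Suc p choose Suc i)"
  have C1: "C * real (Suc i) = real (Suc p) * real (p choose i)"
    unfolding C_def of_nat_mult[symmetric] by (simp only: Suc_times_binomial_eq)
  have C2: "C * real (p - i) = real (Suc p) * real (p choose Suc i)"
    unfolding C_def of_nat_mult[symmetric]
    using binomial_absorb_comp[of "Suc p" "Suc i"] by (simp add: mult.commute)
  have "(Bernstein (Suc p) (Suc i) has_real_derivative
      (C * real (Suc i)) * (x ^ i * (1 - x) ^ (p - i))
        - (C * real (p - i)) * (x ^ Suc i * (1 - x) ^ (p - Suc i))) (at x)"
    unfolding Bernstein_def C_def[symmetric] diff_Suc_Suc
    apply (rule derivative_eq_intros refl)+
    by (simp add: algebra_simps)
  then show ?thesis
    unfolding C1 C2 by (simp add: Bernstein_def right_diff_distrib mult.assoc)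
qed

lemma has_real_derivative_Bernstein_0:
  "(Bernstein (Suc p) 0 has_real_derivative - real (Suc p) * Bernstein p 0 x) (at x)"
  unfolding Bernstein_def
  apply (rule derivative_eq_intros refl)+
  by (simp add: algebra_simps)

lemma has_real_derivative_sum_Bernstein:
  "((\<lambda>x. \<Sum>i<Suc k. Bernstein (Suc p) i x) has_real_derivative
     - real (Suc p) * Bernstein p k x) (at x)"
proof (induction k)
  case 0
  show ?case using has_real_derivative_Bernstein_0 by simp
next
  case (Suc k)
  from DERIV_add[OF Suc.IH has_real_derivative_Bernstein_Suc[of p k x]]
  show ?case by (simp add: algebra_simps)
qed

lemma xk_eq_sum_Bernstein: "xk n k q = (\<Sum>i<k. Bernstein (n - 1) i (1 - q))"
  unfolding xk_def Bernstein_def by (simp add: mult_ac)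

lemma xk_self: "1 \<le> n \<Longrightarrow> xk n n q = 1"
  using sum_Bernstein[of "n - 1" "1 - q"]
  by (simp add: xk_eq_sum_Bernstein lessThan_Suc_atMost[symmetric])

lemma has_real_derivative_xk:
  "(xk (Suc (Suc p)) (Suc a) has_real_derivative real (Suc p) * Bernstein p a (1 - q)) (at q)"
proof -
  have "((\<lambda>q. \<Sum>i<Suc a. Bernstein (Suc p) i (1 - q)) has_real_derivative
      (- real (Suc p) * Bernstein p a (1 - q)) * (- 1)) (at q)"
    by (rule DERIV_chain2[OF has_real_derivative_sum_Bernstein])
      (auto intro!: derivative_eq_intros)
  moreover have "xk (Suc (Suc p)) (Suc a) = (\<lambda>q. \<Sum>i<Suc a. Bernstein (Suc p) i (1 - q))"
    by (rule ext) (simp only: xk_eq_sum_Bernstein diff_Suc_1)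
  ultimately show ?thesis
    by (simp add: algebra_simps)
qed

definition weight_drop :: "nat \<Rightarrow> (nat \<Rightarrow> real) \<Rightarrow> nat \<Rightarrow> real" where
  "weight_drop n w k = w k - (if k < n then w (Suc k) else 0)"

lemma alloc_eq_sum_weight_drop: "alloc n w q = (\<Sum>k\<in>{1..n}. weight_drop n w k * xk n k q)"
  by (simp add: alloc_def weight_drop_def)

lemma weight_drop_nonneg:
  assumes "\<forall>i\<in>{1..<n}. w (Suc i) \<le> w i" and "w n \<ge> 0" and "k \<in> {1..n}"
  shows "0 \<le> weight_drop n w k"
  using assms by (auto simp: weight_drop_def)

lemma alloc_eq_last_weight:
  assumes "1 \<le> n" and "\<forall>k\<in>{1..<n}. weight_drop n w k = 0"
  shows "alloc n w q = w n"
proof -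
  have "{1..n} = insert n {1..<n}" using assms(1) by auto
  then have "alloc n w q = weight_drop n w n * xk n n q + (\<Sum>k\<in>{1..<n}. weight_drop n w k * xk n k q)"
    by (simp add: alloc_eq_sum_weight_drop)
  also have "\<dots> = w n"
    using assms by (simp add: xk_self weight_drop_def)
  finally show ?thesis .
qed

lemma weight_drop_pos_if_alloc_nonconst:
  assumes "1 \<le> n" and "\<And>k. k \<in> {1..n} \<Longrightarrow> 0 \<le> weight_drop n w k"
    and "\<not> (\<exists>c. \<forall>q\<in>{0..1}. alloc n w q = c)"
  shows "\<exists>j\<in>{1..<n}. 0 < weight_drop n w j"
proof (rule ccontr)
  assume "\<not> ?thesis"
  then have "weight_drop n w k = 0" if "k \<in> {1..<n}" for k
    using assms(2)[of k] that by force
  then have "\<forall>q\<in>{0..1}. alloc n w q = w n"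
    using alloc_eq_last_weight[OF assms(1)] by blast
  with assms(3) show False by blast
qed

lemma has_real_derivative_alloc:
  "(alloc (Suc (Suc p)) w has_real_derivative
     real (Suc p) * (\<Sum>k\<in>{1..Suc (Suc p)}. weight_drop (Suc (Suc p)) w k * Bernstein p (k - 1) (1 - q))) (at q)"
proof -
  have "((\<lambda>q. \<Sum>k\<in>{1..Suc (Suc p)}. weight_drop (Suc (Suc p)) w k * xk (Suc (Suc p)) k q)
      has_real_derivative
      (\<Sum>k\<in>{1..Suc (Suc p)}. weight_drop (Suc (Suc p)) w k * (real (Suc p) * Bernstein p (k - 1) (1 - q)))) (at q)"
  proof (intro DERIV_sum DERIV_cmult)
    fix k assume "k \<in> {1..Suc (Suc p)}"
    then obtain a where "k = Suc a" by (cases k) auto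
    then show "(xk (Suc (Suc p)) k has_real_derivative real (Suc p) * Bernstein p (k - 1) (1 - q)) (at q)"
      using has_real_derivative_xk by simp
  qed
  moreover have "alloc (Suc (Suc p)) w =
      (\<lambda>q. \<Sum>k\<in>{1..Suc (Suc p)}. weight_drop (Suc (Suc p)) w k * xk (Suc (Suc p)) k q)"
    by (rule ext) (rule alloc_eq_sum_weight_drop)
  ultimately show ?thesis
    by (simp only: sum_distrib_left mult.left_commute)
qed

lemma deriv_alloc_pos:
  assumes q: "0 < q" "q < 1"
    and drop_nonneg: "\<And>k. k \<in> {1..Suc (Suc p)} \<Longrightarrow> 0 \<le> weight_drop (Suc (Suc p)) w k"
    and j: "j \<in> {1..<Suc (Suc p)}" "0 < weight_drop (Suc (Suc p)) w j"
  shows "0 < deriv (alloc (Suc (Suc p)) w) q"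
proof -
  have "0 < (\<Sum>k\<in>{1..Suc (Suc p)}. weight_drop (Suc (Suc p)) w k * Bernstein p (k - 1) (1 - q))"
    using j q drop_nonneg
    by (intro sum_pos2[of _ j]) (auto intro!: mult_pos_pos mult_nonneg_nonneg Bernstein_pos Bernstein_nonneg)
  then show ?thesis
    by (simp add: DERIV_imp_deriv[OF has_real_derivative_alloc])
qed

definition logit :: "real \<Rightarrow> real" where
  "logit q = ln (q / (1 - q))"

lemma exp_logit: "0 < q \<Longrightarrow> q < 1 \<Longrightarrow> exp (logit q) = q / (1 - q)"
  by (simp add: logit_def)

lemma strict_mono_on_logit: "strict_mono_on {0<..<1} logit"
proof (rule strict_mono_onI)
  fix q r :: real assume q: "q \<in> {0<..<1}" and r: "r \<in> {0<..<1}" and "q < r"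
  then have "q / (1 - q) < r / (1 - r)" by (simp add: field_simps)
  with q r show "logit q < logit r" by (simp add: logit_def)
qed

lemma logit_surj: "\<exists>q\<in>{0<..<1}. logit q = u"
proof
  have pos: "0 < 1 + exp u" by (simp add: add_pos_pos)
  show "exp u / (1 + exp u) \<in> {0<..<1}" using pos by simp
  have "1 - exp u / (1 + exp u) = 1 / (1 + exp u)" using pos by (simp add: field_simps)
  then show "logit (exp u / (1 + exp u)) = u" using pos by (simp add: logit_def)
qed

lemma Bernstein_compl_eq_exp_logit:
  assumes "0 < q" "q < 1" "j \<le> p"
  shows "Bernstein p j (1 - q) = real (p choose j) * (1 - q) ^ p * exp ((real p - real j) * logit q)"
proof -
  have "real p - real j = real (p - j)" using assms(3) by (simp add: of_nat_diff)
  then have "exp ((real p - real j) * logit q) = (q / (1 - q)) ^ (p - j)"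
    by (simp only: exp_of_nat_mult exp_logit[OF assms(1,2)])
  moreover have "(1 - q) ^ p = (1 - q) ^ (p - j) * (1 - q) ^ j"
    using assms(3) by (simp flip: power_add)
  ultimately show ?thesis
    using assms(2) by (simp add: Bernstein_def power_divide)
qed

lemma Bernstein_compl_ratio_exp_logit:
  assumes "0 < q" "q < 1"
  shows "(1 - q) * Bernstein p a (1 - q) * real (p choose b)
      * (exp ((real a - real b) * logit q) + exp ((real a - real b + 1) * logit q))
    = real (p choose a) * Bernstein p b (1 - q)"
proof (cases "a \<le> p \<and> b \<le> p")
  case True
  define u where "u = logit q"
  have "(1 - q) * (1 + exp u) = 1"
    using assms by (simp add: u_def exp_logit field_simps)
  moreover have "exp ((real p - real a) * u) * (exp ((real a - real b) * u) + exp ((real a - real b + 1) * u))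
      = (1 + exp u) * exp ((real p - real b) * u)"
    by (simp add: distrib_left flip: exp_add) (simp add: algebra_simps flip: exp_add)
  ultimately show ?thesis
    using True assms by (simp add: Bernstein_compl_eq_exp_logit u_def[symmetric])
next
  case False
  then show ?thesis by (auto simp: Bernstein_def)
qed

definition exp_sum :: "'a set \<Rightarrow> ('a \<Rightarrow> real) \<Rightarrow> ('a \<Rightarrow> real) \<Rightarrow> real \<Rightarrow> real" where
  "exp_sum I c s u = (\<Sum>i\<in>I. c i * exp (s i * u))"

lemma has_real_derivative_exp_sum:
  "(exp_sum I c s has_real_derivative exp_sum I (\<lambda>i. c i * s i) s u) (at u)"
  unfolding exp_sum_def[abs_def]
  by (auto intro!: derivative_eq_intros simp: mult_ac)

lemma exp_sum_pos:
  assumes "finite I" "\<And>i. i \<in> I \<Longrightarrow> 0 \<le> c i" "j \<in> I" "0 < c j"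
  shows "0 < exp_sum I c s u"
  unfolding exp_sum_def using assms by (intro sum_pos2[of _ j]) auto

lemma mult_exp_mult_mono: "(u::real) \<le> v \<Longrightarrow> t * exp (t * u) \<le> t * exp (t * v)"
  by (cases "0 \<le> t") (auto intro: mult_left_mono mult_left_mono_neg simp: mult_le_cancel_left)

lemma mult_exp_mult_strict_mono: "(t::real) \<noteq> 0 \<Longrightarrow> u < v \<Longrightarrow> t * exp (t * u) < t * exp (t * v)"
  by (cases "0 < t") (auto simp: mult_less_cancel_left)

lemma exp_sum_slope_mono:
  assumes "\<And>i. i \<in> I \<Longrightarrow> 0 \<le> c i" "u \<le> v"
  shows "exp_sum I (\<lambda>i. c i * s i) s u \<le> exp_sum I (\<lambda>i. c i * s i) s v"
  unfolding exp_sum_def mult.assoc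
  using assms by (intro sum_mono mult_left_mono mult_exp_mult_mono) auto

lemma exp_sum_slope_strict_mono:
  assumes "finite I" "\<And>i. i \<in> I \<Longrightarrow> 0 \<le> c i" "j \<in> I" "0 < c j" "s j \<noteq> 0" "u < v"
  shows "exp_sum I (\<lambda>i. c i * s i) s u < exp_sum I (\<lambda>i. c i * s i) s v"
  unfolding exp_sum_def mult.assoc
  using assms by (intro sum_strict_mono_ex1)
    (auto intro!: bexI[of _ j] mult_left_mono mult_exp_mult_mono mult_exp_mult_strict_mono)

lemma exp_sum_shift_slope_strict_mono:
  assumes "finite I" "\<And>i. i \<in> I \<Longrightarrow> 0 \<le> c i" "j \<in> I" "0 < c j" "u < v"
  shows "exp_sum I (\<lambda>i. c i * s i) s u + exp_sum I (\<lambda>i. c i * (s i + 1)) (\<lambda>i. s i + 1) u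
       < exp_sum I (\<lambda>i. c i * s i) s v + exp_sum I (\<lambda>i. c i * (s i + 1)) (\<lambda>i. s i + 1) v"
proof (cases "s j = 0")
  case True
  with assms show ?thesis
    by (intro add_le_less_mono exp_sum_slope_mono exp_sum_slope_strict_mono[where j = j]) auto
next
  case False
  with assms show ?thesis
    by (intro add_less_le_mono exp_sum_slope_mono exp_sum_slope_strict_mono[where j = j]) auto
qed

lemma strict_mono_on_sign_change:
  fixes g :: "real \<Rightarrow> real"
  assumes "strict_mono_on {0<..<1} g"
  shows "\<exists>m\<in>{0..1}. (\<forall>q\<in>{0<..<1}. q < m \<longrightarrow> g q < 0) \<and> (\<forall>q\<in>{0<..<1}. m < q \<longrightarrow> 0 \<le> g q)"
proof -
  define A where "A = {q \<in> {0<..<1}. g q < 0}"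
  define m where "m = Sup (insert 0 A)"
    \<comment> \<open>inserting 0 keeps the supremum meaningful when g is nonnegative throughout\<close>
  have bdd: "bdd_above (insert 0 A)"
    unfolding A_def by (auto intro: bdd_aboveI[of _ 1])
  have "m \<in> {0..1}"
    unfolding m_def using bdd by (auto intro: cSup_upper cSup_least simp: A_def)
  moreover have "g q < 0" if "q \<in> {0<..<1}" "q < m" for q
  proof -
    obtain r where "r \<in> insert 0 A" "q < r"
      using \<open>q < m\<close> less_cSup_iff[OF _ bdd] unfolding m_def by blast
    with that have "r \<in> A" by auto
    then have "g q < g r"
      using strict_mono_onD[OF assms that(1) _ \<open>q < r\<close>] by (simp add: A_def)
    with \<open>r \<in> A\<close> show ?thesis by (simp add: A_def)
  qed
  moreover have "0 \<le> g q" if "q \<in> {0<..<1}" "m < q" for q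
    using that cSup_upper[OF _ bdd, of q] unfolding m_def A_def by fastforce
  ultimately show ?thesis by blast
qed

lemma strict_mono_deriv_imp_unimodal:
  fixes G G' L :: "real \<Rightarrow> real"
  assumes G: "\<And>u. (G has_real_derivative G' u) (at u)"
    and G'_mono: "\<And>u v. u < v \<Longrightarrow> G' u < G' v"
    and L_mono: "strict_mono_on {0<..<1} L"
    and L_surj: "\<And>u. \<exists>q\<in>{0<..<1}. L q = u"
  shows "\<exists>m\<in>{0..1}.
           (\<forall>a b. 0 < a \<and> a < b \<and> b \<le> m \<and> b < 1 \<longrightarrow> G (L b) < G (L a)) \<and>
           (\<forall>a b. 0 < a \<and> m \<le> a \<and> a < b \<and> b < 1 \<longrightarrow> G (L a) < G (L b))"
proof -
  have L_less: "L q < L r \<longleftrightarrow> q < r" if "q \<in> {0<..<1}" "r \<in> {0<..<1}" for q r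
    using strict_mono_on_less[OF L_mono that] .
  have "strict_mono_on {0<..<1} (\<lambda>q. G' (L q))"
    by (intro strict_mono_onI G'_mono) (simp add: L_less)
  then obtain m where "m \<in> {0..1}"
    and slope_neg: "\<And>q. q \<in> {0<..<1} \<Longrightarrow> q < m \<Longrightarrow> G' (L q) < 0"
    and slope_nonneg: "\<And>q. q \<in> {0<..<1} \<Longrightarrow> m < q \<Longrightarrow> 0 \<le> G' (L q)"
    using strict_mono_on_sign_change by blast
  have G_cont: "continuous_on S G" for S
    using G by (meson DERIV_isCont continuous_at_imp_continuous_on)
  show ?thesis
  proof (intro bexI[OF _ \<open>m \<in> {0..1}\<close>] conjI allI impI)
    fix a b assume ab: "0 < a \<and> a < b \<and> b \<le> m \<and> b < 1"
    show "G (L b) < G (L a)"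
    proof (rule DERIV_neg_imp_decreasing_open[OF _ _ G_cont])
      show "L a < L b" using ab by (simp add: L_less)
      fix x assume x: "L a < x" "x < L b"
      obtain q where q: "q \<in> {0<..<1}" "L q = x" using L_surj by blast
      with x ab have "q < b" using L_less[of q b] by auto
      with q ab show "\<exists>y. (G has_real_derivative y) (at x) \<and> y < 0"
        using G slope_neg by fastforce
    qed
  next
    fix a b assume ab: "0 < a \<and> m \<le> a \<and> a < b \<and> b < 1"
    show "G (L a) < G (L b)"
    proof (rule DERIV_pos_imp_increasing_open[OF _ _ G_cont])
      show "L a < L b" using ab by (simp add: L_less)
      fix x assume x: "L a < x" "x < L b"
      obtain q where q: "q \<in> {0<..<1}" "L q = x" using L_surj by blast
      with x ab have "a < q" using L_less[of a q] by auto
      define r where "r = (a + q) / 2"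
      have r: "r \<in> {0<..<1}" "m < r" "r < q" using \<open>a < q\<close> q ab by (auto simp: r_def)
      then have "G' (L r) < G' x"
        using q L_less[of r q] by (intro G'_mono) auto
      with slope_nonneg[OF r(1,2)] show "\<exists>y. (G has_real_derivative y) (at x) \<and> 0 < y"
        using G by fastforce
    qed
  qed
qed

lemma exp_sum_shift_logit_unimodal:
  fixes c s :: "'a \<Rightarrow> real"
  assumes "finite I" "\<And>i. i \<in> I \<Longrightarrow> 0 \<le> c i" "j \<in> I" "0 < c j"
  defines "G \<equiv> \<lambda>u. exp_sum I c s u + exp_sum I c (\<lambda>i. s i + 1) u"
  shows "\<exists>m\<in>{0..1}.
           (\<forall>a b. 0 < a \<and> a < b \<and> b \<le> m \<and> b < 1 \<longrightarrow> G (logit b) < G (logit a)) \<and>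
           (\<forall>a b. 0 < a \<and> m \<le> a \<and> a < b \<and> b < 1 \<longrightarrow> G (logit a) < G (logit b))"
proof (rule strict_mono_deriv_imp_unimodal[OF _ _ strict_mono_on_logit logit_surj])
  show "(G has_real_derivative exp_sum I (\<lambda>i. c i * s i) s u
      + exp_sum I (\<lambda>i. c i * (s i + 1)) (\<lambda>i. s i + 1) u) (at u)" for u
    unfolding G_def by (intro DERIV_add has_real_derivative_exp_sum)
qed (use assms in \<open>auto intro: exp_sum_shift_slope_strict_mono\<close>)

lemma Zk_eq_div_exp_sum:
  fixes q :: real
  assumes q: "0 < q" "q < 1" and "a \<le> p" and alloc_slope: "deriv (alloc (Suc (Suc p)) w) q \<noteq> 0"
  defines "c \<equiv> \<lambda>j. weight_drop (Suc (Suc p)) w j * real (p choose (j - 1))"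
    and "s \<equiv> \<lambda>j. real (Suc a) - real j"
  shows "Zk (Suc (Suc p)) w (Suc a) q = real (p choose a) /
      (exp_sum {1..Suc (Suc p)} c s (logit q) + exp_sum {1..Suc (Suc p)} c (\<lambda>j. s j + 1) (logit q))"
    (is "_ = _ / ?G")
proof -
  define S where "S = (\<Sum>j\<in>{1..Suc (Suc p)}. weight_drop (Suc (Suc p)) w j * Bernstein p (j - 1) (1 - q))"
  define X where "X = (1 - q) * Bernstein p a (1 - q)"
  have Z: "Zk (Suc (Suc p)) w (Suc a) q = X / S"
    unfolding Zk_def X_def S_def
    by (simp add: DERIV_imp_deriv[OF has_real_derivative_alloc] DERIV_imp_deriv[OF has_real_derivative_xk])
  have "S \<noteq> 0"
    using alloc_slope by (simp add: S_def DERIV_imp_deriv[OF has_real_derivative_alloc])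
  have "X \<noteq> 0"
    using q \<open>a \<le> p\<close> Bernstein_pos[of "1 - q" a p] by (simp add: X_def)
  have "X * ?G = real (p choose a) * S"
    unfolding exp_sum_def S_def sum_distrib_left sum.distrib[symmetric]
  proof (rule sum.cong[OF refl])
    fix j assume "j \<in> {1..Suc (Suc p)}"
    then have sj: "s j = real a - real (j - 1)" by (simp add: s_def of_nat_diff)
    have "X * (c j * exp (s j * logit q) + c j * exp ((s j + 1) * logit q))
        = weight_drop (Suc (Suc p)) w j * ((1 - q) * Bernstein p a (1 - q) * real (p choose (j - 1))
          * (exp ((real a - real (j - 1)) * logit q) + exp ((real a - real (j - 1) + 1) * logit q)))"
      unfolding X_def c_def sj by (simp only: algebra_simps)
    also have "\<dots> = real (p choose a) * (weight_drop (Suc (Suc p)) w j * Bernstein p (j - 1) (1 - q))"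
      by (simp only: Bernstein_compl_ratio_exp_logit[OF q] mult.left_commute)
    finally show "X * (c j * exp (s j * logit q) + c j * exp ((s j + 1) * logit q))
        = real (p choose a) * (weight_drop (Suc (Suc p)) w j * Bernstein p (j - 1) (1 - q))" .
  qed
  moreover have "real (p choose a) \<noteq> 0" using \<open>a \<le> p\<close> by simp
  ultimately have "?G \<noteq> 0" using \<open>S \<noteq> 0\<close> by auto
  with \<open>S \<noteq> 0\<close> \<open>X * ?G = real (p choose a) * S\<close> show ?thesis
    unfolding Z by (simp add: frac_eq_eq mult.commute)
qed

theorem mainTheorem4:
  fixes n k :: nat and w :: "nat \<Rightarrow> real"
  assumes "n \<ge> 2"
    and "w 1 \<le> 1"
    and "\<forall>i\<in>{1..<n}. w (Suc i) \<le> w i"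
    and "w n \<ge> 0"
    and "\<not> (\<exists>c. \<forall>q\<in>{0..1}. alloc n w q = c)"
    and "k \<in> {1..n-1}"
  shows "\<exists>m\<in>{0..1::real}.
           (\<forall>a b. 0 < a \<and> a < b \<and> b \<le> m \<and> b < 1 \<longrightarrow> Zk n w k a < Zk n w k b) \<and>
           (\<forall>a b. 0 < a \<and> m \<le> a \<and> a < b \<and> b < 1 \<longrightarrow> Zk n w k a > Zk n w k b)"
proof -
  obtain p where n: "n = Suc (Suc p)" using \<open>n \<ge> 2\<close> by (intro that[of "n - 2"]) simp
  obtain a where k: "k = Suc a" and "a \<le> p" using \<open>k \<in> {1..n-1}\<close> n by (cases k) auto
  have drop_nonneg: "\<And>j. j \<in> {1..n} \<Longrightarrow> 0 \<le> weight_drop n w j"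
    using assms(3,4) by (rule weight_drop_nonneg)
  obtain j where j: "j \<in> {1..<n}" "0 < weight_drop n w j"
    using weight_drop_pos_if_alloc_nonconst[OF _ drop_nonneg assms(5)] n by auto
  define c where "c = (\<lambda>j. weight_drop n w j * real (p choose (j - 1)))"
  define s where "s = (\<lambda>j. real k - real j)"
  define G where "G = (\<lambda>u. exp_sum {1..n} c s u + exp_sum {1..n} c (\<lambda>j. s j + 1) u)"
  have c: "\<And>i. i \<in> {1..n} \<Longrightarrow> 0 \<le> c i" "0 < c j"
    using drop_nonneg j n by (auto simp: c_def)
  have G_pos: "0 < G u" for u
    using c j by (auto simp: G_def intro!: add_pos_pos exp_sum_pos[where j = j])
  obtain m where "m \<in> {0..1}"
    and decr: "\<forall>a b. 0 < a \<and> a < b \<and> b \<le> m \<and> b < 1 \<longrightarrow> G (logit b) < G (logit a)"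
    and incr: "\<forall>a b. 0 < a \<and> m \<le> a \<and> a < b \<and> b < 1 \<longrightarrow> G (logit a) < G (logit b)"
    using exp_sum_shift_logit_unimodal[of "{1..n}" c j s] c j unfolding G_def by auto
  have Z: "Zk n w k q = real (p choose a) / G (logit q)" if "0 < q" "q < 1" for q
  proof -
    have "0 < deriv (alloc n w) q"
      using that drop_nonneg j unfolding n by (intro deriv_alloc_pos) auto
    then show ?thesis
      using Zk_eq_div_exp_sum[OF that \<open>a \<le> p\<close>, of w] unfolding G_def c_def s_def n k by simp
  qed
  have "0 < real (p choose a)" using \<open>a \<le> p\<close> by simp
  with \<open>m \<in> {0..1}\<close> decr incr G_pos show ?thesis
    by (intro bexI[of _ m]) (auto simp: Z intro!: divide_strict_left_mono mult_pos_pos)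
qed

end
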